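(* The map $\phi$ from nonempty faces of $V_0$ to $\mathcal{SC}(\mathcal M)$ is injective and order-preserving: if $F_1\subseteq F_2$ are faces of $V_0$, then $\phi(F_1)\le\phi(F_2)$.
   Context: Let $\mathcal M$ be a regular matroid on a finite ground set $E$, represented by a totally unimodular matrix $M$ with columns $c_e$; $\mathcal F=\ker M\subseteq\mathbb R^E$ with Euclidean inner product, $\Lambda=\ker M\cap\mathbb Z^E$, $V_0=\{x\in\mathcal F:\|x\|\le\|x-\mu\|\ \forall\mu\in\Lambda\}$. A circuit in $\Lambda$ is a flow with coordinates in $\{-1,0,1\}$ whose support is a circuit (minimal dependent set of columns) of $\mathcal M$; $\Xi$ is the set of these. For $\gamma\in\Xi$, $F_\gamma=\{x\in\mathcal F:2\langle x,\gamma\rangle=\|\gamma\|^2\}$. An oriented submatroid is $(S,\varepsilon)$, $S\subseteq E$, $\varepsilon:S\to\{\pm1\}$; it is strongly connected if for every $e\in S$ there is $w\in\mathbb Z_{\ge0}^S$ with $w_e\ge1$ and $\sum_{f\in S}w_f\varepsilon_fc_f=0$. $\mathcal{SC}(\mathcal M)$ is the set of these, ordered by $(S,\varepsilon)\le(S',\varepsilon')$ iff $S'\subseteq S$ and $\varepsilon'=\varepsilon|_{S'}$. For a nonempty face $F$ of $V_0$, $\mathcal U(F)=\{\gamma\in\Xi:F\subseteq F_\gamma\}$ and $\phi(F)=(S,\varepsilon)$ with $S=\bigcup_{\gamma\in\mathcal U(F)}\operatorname{supp}\gamma$ and $\varepsilon_e=\operatorname{sgn}\gamma_e$ for any $\gamma\in\mathcal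 U(F)$ with $e\in\operatorname{supp}\gamma$ (well defined). *)

theory Defs
  imports "HOL-Analysis.Analysis" "HOL-Library.FuncSet" "HOL-Combinatorics.Permutations"
begin

text \<open>Ground set E = UNIV of the finite type 'e; rows indexed by the finite type 'r.
  The matrix M has real entries; its column for e is column e M.\<close>

definition totally_unimodular :: "real^'e^'r \<Rightarrow> bool" where
  "totally_unimodular M \<longleftrightarrow>
     (\<forall>(k::nat) (f::nat \<Rightarrow> 'r) (g::nat \<Rightarrow> 'e).
        inj_on f {..<k} \<and> inj_on g {..<k} \<longrightarrow>
        (\<Sum>p | p permutes {..<k}. of_int (sign p) * (\<Prod>i<k. M $ f i $ g (p i)))
           \<in> {-1, 0, 1::real})"

definition flows :: "real^'e^'r \<Rightarrow> (real^'e) set" where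
  "flows M = {x. M *v x = 0}"

definition lattice_flows :: "real^'e^'r \<Rightarrow> (real^'e) set" where
  "lattice_flows M = {x \<in> flows M. \<forall>e. x $ e \<in> \<int>}"

definition voronoi0 :: "real^'e^'r \<Rightarrow> (real^'e) set" where
  "voronoi0 M = {x \<in> flows M. \<forall>\<mu> \<in> lattice_flows M. norm x \<le> norm (x - \<mu>)}"

definition supp :: "real^'e \<Rightarrow> 'e set" where
  "supp x = {e. x $ e \<noteq> 0}"

definition dependent_cols :: "real^'e^'r \<Rightarrow> 'e set \<Rightarrow> bool" where
  "dependent_cols M S \<longleftrightarrow>
     (\<exists>a::'e \<Rightarrow> real. (\<exists>e\<in>S. a e \<noteq> 0) \<and> (\<Sum>e\<in>S. a e *\<^sub>R column e M) = 0)"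

definition matroid_circuit :: "real^'e^'r \<Rightarrow> 'e set \<Rightarrow> bool" where
  "matroid_circuit M C \<longleftrightarrow> dependent_cols M C \<and> (\<forall>D. D \<subset> C \<longrightarrow> \<not> dependent_cols M D)"

definition lattice_circuits :: "real^'e^'r \<Rightarrow> (real^'e) set" where
  "lattice_circuits M = {\<gamma> \<in> lattice_flows M. (\<forall>e. \<gamma> $ e \<in> {-1, 0, 1}) \<and> matroid_circuit M (supp \<gamma>)}"

definition circuit_hyperplane :: "real^'e^'r \<Rightarrow> real^'e \<Rightarrow> (real^'e) set" where
  "circuit_hyperplane M \<gamma> = {x \<in> flows M. 2 * (x \<bullet> \<gamma>) = (norm \<gamma>)\<^sup>2}"

text \<open>Oriented submatroids (S, eps), with eps an extensional function S \<rightarrow> {-1,1}.\<close>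
definition oriented_submatroid :: "('e set \<times> ('e \<Rightarrow> real)) \<Rightarrow> bool" where
  "oriented_submatroid P \<longleftrightarrow> snd P \<in> fst P \<rightarrow>\<^sub>E {-1, 1}"

definition strongly_connected :: "real^'e^'r \<Rightarrow> ('e set \<times> ('e \<Rightarrow> real)) \<Rightarrow> bool" where
  "strongly_connected M P \<longleftrightarrow> oriented_submatroid P \<and>
     (\<forall>e \<in> fst P. \<exists>w::'e \<Rightarrow> nat. w e \<ge> 1 \<and>
        (\<Sum>f \<in> fst P. (real (w f) * snd P f) *\<^sub>R column f M) = 0)"

definition SC :: "real^'e^'r \<Rightarrow> ('e set \<times> ('e \<Rightarrow> real)) set" where
  "SC M = {P. strongly_connected M P}"

definition sc_le :: "('e set \<times> ('e \<Rightarrow> real)) \<Rightarrow> ('e set \<times> ('e \<Rightarrow> real)) \<Rightarrow> bool" where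
  "sc_le P Q \<longleftrightarrow> fst Q \<subseteq> fst P \<and> snd Q = restrict (snd P) (fst Q)"

definition U_face :: "real^'e^'r \<Rightarrow> (real^'e) set \<Rightarrow> (real^'e) set" where
  "U_face M F = {\<gamma> \<in> lattice_circuits M. F \<subseteq> circuit_hyperplane M \<gamma>}"

definition phi :: "real^'e^'r \<Rightarrow> (real^'e) set \<Rightarrow> ('e set \<times> ('e \<Rightarrow> real))" where
  "phi M F = (let S = (\<Union>\<gamma> \<in> U_face M F. supp \<gamma>) in
     (S, restrict (\<lambda>e. sgn ((SOME \<gamma>. \<gamma> \<in> U_face M F \<and> e \<in> supp \<gamma>) $ e)) S))"

end

theory Submission
  imports Defs "Jordan_Normal_Form.Determinant"
begin

no_notation Matrix.vec_index (infixl "$" 100)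
no_notation Matrix.scalar_prod (infix "\<bullet>" 70)

text \<open>
  For a totally unimodular matrix every circuit is the support of a flow with entries in
  {-1, 0, 1}, and every nonzero integer flow \<mu> contains such a lattice circuit conformal to it.
  Peeling these circuits off gives 2 (x \<bullet> \<mu>) \<le> norm1 \<mu> for every x satisfying the circuit
  inequalities 2 (x \<bullet> \<gamma>) \<le> |\<gamma>|^2, so V0 is the polyhedron cut out by them. If two circuits
  tight at a point of V0 had opposite signs at some edge, their sum would violate this bound;
  hence the circuits tight on a face F are consistently oriented, \<phi>(F) is well defined, and each
  of these circuits witnesses strong connectivity. Conversely, a circuit whose signed support lies
  in \<phi>(F) is tight on F: the sum of the tight circuits minus it is an integer flow without
  cancellation. As a face of a polyhedron is determined by the inequalities tight on it, \<phi>(F)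
  determines F; monotonicity holds because larger faces have fewer tight circuits.
\<close>

section \<open>Independent columns and nonsingular minors\<close>

definition independent_columns :: "('i \<Rightarrow> 'j \<Rightarrow> real) \<Rightarrow> 'i set \<Rightarrow> 'j set \<Rightarrow> bool" where
  "independent_columns A I J \<longleftrightarrow> (\<forall>z. (\<forall>i\<in>I. (\<Sum>j\<in>J. A i j * z j) = 0) \<longrightarrow> (\<forall>j\<in>J. z j = 0))"

lemma det_zero_row:
  assumes "l < n" "\<And>k. k < n \<Longrightarrow> F (l, k) = (0::'a::comm_ring_1)"
  shows "Determinant.det (Matrix.mat n n F) = 0"
proof -
  have "(\<Prod>i = 0..<n. Matrix.mat n n F $$ (i, p i)) = 0" if "p permutes {0..<n}" for p
  proof -
    have "p l < n" using assms(1) that by (auto dest: permutes_in_image)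
    then show ?thesis
      using assms by (intro prod_zero) (auto intro!: bexI[of _ l])
  qed
  then show ?thesis unfolding det_def by (auto intro!: sum.neutral)
qed

lemma independent_columns_card_le:
  assumes I: "finite I" and J: "finite J" and indep: "independent_columns A I J"
  shows "card J \<le> card I"
proof (rule ccontr)
  define n where "n = card J"
  assume "\<not> card J \<le> card I"
  then have lt: "card I < n" by (simp add: n_def)
  obtain f where f: "bij_betw f {..<card I} I"
    using ex_bij_betw_nat_finite[OF I] by (auto simp: atLeast0LessThan)
  obtain g where g: "bij_betw g {..<n} J"
    using ex_bij_betw_nat_finite[OF J] by (auto simp: atLeast0LessThan n_def)
  \<comment> \<open>padding the system with zero rows gives a singular square matrix\<close>
  define B where "B = Matrix.mat n n (\<lambda>(l, k). if l < card I then A (f l) (g k) else 0)"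
  have "Determinant.det B = 0"
    unfolding B_def by (rule det_zero_row[of "n - 1"]) (use lt in auto)
  then obtain v where v: "v \<in> carrier_vec n" "v \<noteq> 0\<^sub>v n" "B *\<^sub>v v = 0\<^sub>v n"
    using det_0_iff_vec_prod_zero_field[of B n] by (auto simp: B_def)
  define z where "z j = vec_index v (inv_into {..<n} g j)" for j
  have zg: "z (g k) = vec_index v k" if "k < n" for k
    using g that by (auto simp: z_def bij_betw_def inv_into_f_f)
  have "(\<Sum>j\<in>J. A i j * z j) = 0" if "i \<in> I" for i
  proof -
    obtain l where l: "l < card I" "i = f l"
      using f \<open>i \<in> I\<close> by (auto simp: bij_betw_def)
    have "(\<Sum>j\<in>J. A i j * z j) = (\<Sum>k<n. A (f l) (g k) * vec_index v k)"
      using sum.reindex_bij_betw[OF g, of "\<lambda>j. A i j * z j"] zg l(2) by simp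
    also have "\<dots> = vec_index (B *\<^sub>v v) l"
      using l lt v(1) by (simp add: B_def scalar_prod_def atLeast0LessThan)
    finally show ?thesis using v(3) l lt by simp
  qed
  then have "\<forall>j\<in>J. z j = 0" using indep by (simp add: independent_columns_def)
  then have "v = 0\<^sub>v n"
    using v(1) g zg by (intro eq_vecI) (auto simp: bij_betw_def)
  with v(2) show False by simp
qed

lemma independent_rows_det_nonzero:
  assumes f: "bij_betw f {..<n} I" and g: "bij_betw g {..<n} J"
    and indep: "independent_columns (\<lambda>j i. A i j) J I"
  shows "Determinant.det (Matrix.mat n n (\<lambda>(l, k). A (f l) (g k))) \<noteq> 0"
proof -
  define B where "B = Matrix.mat n n (\<lambda>(l, k). A (f l) (g k))"
  have B: "B \<in> carrier_mat n n" by (simp add: B_def)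
  have "Determinant.det (transpose_mat B) \<noteq> 0"
  proof
    assume "Determinant.det (transpose_mat B) = 0"
    then obtain v where v: "v \<in> carrier_vec n" "v \<noteq> 0\<^sub>v n" "transpose_mat B *\<^sub>v v = 0\<^sub>v n"
      using det_0_iff_vec_prod_zero_field[of "transpose_mat B" n] B by auto
    define a where "a i = vec_index v (inv_into {..<n} f i)" for i
    have af: "a (f l) = vec_index v l" if "l < n" for l
      using f that by (auto simp: a_def bij_betw_def inv_into_f_f)
    have "(\<Sum>i\<in>I. A i j * a i) = 0" if "j \<in> J" for j
    proof -
      obtain k where k: "k < n" "j = g k"
        using g \<open>j \<in> J\<close> by (auto simp: bij_betw_def)
      have "(\<Sum>i\<in>I. A i j * a i) = (\<Sum>l<n. A (f l) (g k) * vec_index v l)"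
        using sum.reindex_bij_betw[OF f, of "\<lambda>i. A i j * a i"] af k(2) by simp
      also have "\<dots> = vec_index (transpose_mat B *\<^sub>v v) k"
        using k v(1) by (simp add: B_def scalar_prod_def atLeast0LessThan)
      finally show ?thesis using v(3) k by simp
    qed
    then have "\<forall>i\<in>I. a i = 0" using indep by (simp add: independent_columns_def)
    then have "v = 0\<^sub>v n"
      using v(1) f af by (intro eq_vecI) (auto simp: bij_betw_def)
    with v(2) show False by simp
  qed
  then have "Determinant.det B \<noteq> 0" by (simp add: det_transpose[OF B])
  then show ?thesis by (simp add: B_def)
qed

lemma row_in_span_if_dependent:
  assumes "finite R" "i \<notin> R" "independent_columns (\<lambda>j i. A i j) J R" "\<not> independent_columns (\<lambda>j i. A i j) J (insert i R)"
  shows "\<exists>c. \<forall>j\<in>J. A i j = (\<Sum>k\<in>R. c k * A k j)"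
proof -
  obtain a where a: "\<forall>j\<in>J. (\<Sum>k\<in>insert i R. A k j * a k) = 0" "\<exists>k\<in>insert i R. a k \<noteq> 0"
    using assms(4) unfolding independent_columns_def by blast
  have ai: "a i \<noteq> 0"
  proof
    assume "a i = 0"
    then have "\<forall>j\<in>J. (\<Sum>k\<in>R. A k j * a k) = 0" using a(1) assms(1,2) by simp
    then have "\<forall>k\<in>R. a k = 0" using assms(3) unfolding independent_columns_def by blast
    with a(2) \<open>a i = 0\<close> show False by auto
  qed
  have "A i j = (\<Sum>k\<in>R. - a k / a i * A k j)" if "j \<in> J" for j
  proof -
    have sum: "A i j * a i + (\<Sum>k\<in>R. A k j * a k) = 0" using a(1) that assms(1,2) by simp
    have "(\<Sum>k\<in>R. - a k / a i * A k j) = (\<Sum>k\<in>R. A k j * a k) * (- 1 / a i)"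
      unfolding sum_distrib_right by (rule sum.cong) auto
    also have "\<dots> = A i j" using sum ai by (simp add: field_simps)
    finally show ?thesis by simp
  qed
  then show ?thesis by (intro exI[of _ "\<lambda>k. - a k / a i"]) blast
qed

lemma independent_columns_of_spanning_rows:
  assumes indep: "independent_columns A I J"
    and span: "\<forall>i\<in>I. \<exists>c. \<forall>j\<in>J. A i j = (\<Sum>k\<in>R. c k * A k j)"
  shows "independent_columns A R J"
  unfolding independent_columns_def
proof (intro allI impI)
  fix z assume z: "\<forall>k\<in>R. (\<Sum>j\<in>J. A k j * z j) = 0"
  have "(\<Sum>j\<in>J. A i j * z j) = 0" if "i \<in> I" for i
  proof -
    obtain c where c: "\<forall>j\<in>J. A i j = (\<Sum>k\<in>R. c k * A k j)" using span \<open>i \<in> I\<close> by blast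
    have "(\<Sum>j\<in>J. A i j * z j) = (\<Sum>j\<in>J. (\<Sum>k\<in>R. c k * A k j) * z j)"
      using c by (intro sum.cong) auto
    also have "\<dots> = (\<Sum>j\<in>J. \<Sum>k\<in>R. c k * (A k j * z j))"
      by (simp add: sum_distrib_right mult.assoc)
    also have "\<dots> = (\<Sum>k\<in>R. \<Sum>j\<in>J. c k * (A k j * z j))"
      by (rule sum.swap)
    also have "\<dots> = (\<Sum>k\<in>R. c k * (\<Sum>j\<in>J. A k j * z j))"
      by (simp add: sum_distrib_left)
    also have "\<dots> = 0" using z by simp
    finally show ?thesis .
  qed
  then show "\<forall>j\<in>J. z j = 0" using indep by (simp add: independent_columns_def)
qed

lemma independent_columns_nonsingular_minor:
  assumes I: "finite I" and J: "finite J" and indep: "independent_columns A I J"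
  obtains f g where "inj_on f {..<card J}" "f ` {..<card J} \<subseteq> I" "bij_betw g {..<card J} J"
    "Determinant.det (Matrix.mat (card J) (card J) (\<lambda>(l, k). A (f l) (g k))) \<noteq> 0"
proof -
  \<comment> \<open>a maximal set of rows independent on J spans all rows, hence has exactly card J elements\<close>
  define Indep where "Indep R \<longleftrightarrow> R \<subseteq> I \<and> independent_columns (\<lambda>j i. A i j) J R" for R
  have "Indep {}" by (simp add: Indep_def independent_columns_def)
  moreover have "card R < Suc (card I)" if "Indep R" for R
    using that I by (simp add: Indep_def card_mono le_imp_less_Suc)
  ultimately obtain R where R: "Indep R" and Rmax: "\<And>R'. Indep R' \<Longrightarrow> card R' \<le> card R"
    using ex_has_greatest_nat[of Indep "{}" card "Suc (card I)"] by blast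
  have finR: "finite R" using R I by (auto simp: Indep_def finite_subset)
  have "\<exists>c. \<forall>j\<in>J. A i j = (\<Sum>k\<in>R. c k * A k j)" if "i \<in> I" for i
  proof (cases "i \<in> R")
    case True
    have "(\<Sum>k\<in>R. of_bool (k = i) * A k j) = (\<Sum>k\<in>R. if k = i then A k j else 0)" for j
      by (rule sum.cong) auto
    then have "(\<Sum>k\<in>R. of_bool (k = i) * A k j) = A i j" for j
      using finR True by simp
    then show ?thesis by metis
  next
    case False
    then have "\<not> Indep (insert i R)" using Rmax[of "insert i R"] finR by auto
    then show ?thesis
      using row_in_span_if_dependent[OF finR False, of A J] R that by (simp add: Indep_def)
  qed
  then have "card J \<le> card R"
    using independent_columns_card_le[OF finR J independent_columns_of_spanning_rows[OF indep]] by blast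
  moreover have "card R \<le> card J"
    using independent_columns_card_le[OF J finR, of "\<lambda>j i. A i j"] R by (simp add: Indep_def)
  ultimately have "card R = card J" by simp
  obtain f where f: "bij_betw f {..<card J} R"
    using ex_bij_betw_nat_finite[OF finR] \<open>card R = card J\<close> by (auto simp: atLeast0LessThan)
  obtain g where g: "bij_betw g {..<card J} J"
    using ex_bij_betw_nat_finite[OF J] by (auto simp: atLeast0LessThan)
  have "f ` {..<card J} \<subseteq> I" using f R by (auto simp: bij_betw_def Indep_def)
  moreover have "Determinant.det (Matrix.mat (card J) (card J) (\<lambda>(l, k). A (f l) (g k))) \<noteq> 0"
    using independent_rows_det_nonzero[OF f g] R by (simp add: Indep_def)
  ultimately show thesis by (rule that[OF bij_betw_imp_inj_on[OF f] _ g])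
qed

section \<open>Faces of polyhedra\<close>

lemma rel_interior_tight_imp_tight:
  fixes F :: "'a::euclidean_space set"
  assumes "convex F" "\<forall>z\<in>F. z \<bullet> a \<le> b" "x \<in> rel_interior F" "x \<bullet> a = b" "y \<in> F"
  shows "y \<bullet> a = b"
proof -
  obtain e where e: "e > 1" "(1 - e) *\<^sub>R y + e *\<^sub>R x \<in> F"
    using convex_rel_interior_if2[OF assms(1,3)] hull_inc[OF assms(5), of affine] by blast
  then have "(1 - e) * (y \<bullet> a) + e * b \<le> b"
    using assms(2,4) by (auto simp: inner_add_left)
  then have "(e - 1) * (b - y \<bullet> a) \<le> 0" by (simp add: algebra_simps)
  then have "b \<le> y \<bullet> a" using e(1) by (simp add: mult_le_0_iff)
  with assms(2,5) show ?thesis by (simp add: order_antisym)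
qed

lemma inequalities_hold_beyond:
  fixes x y :: "'a::real_inner"
  assumes A: "finite A" and x: "\<forall>a\<in>A. x \<bullet> a \<le> b a"
    and tight: "\<forall>a\<in>A. x \<bullet> a = b a \<longrightarrow> y \<bullet> a = b a"
  obtains s where "s > 0" "\<forall>a\<in>A. (x + s *\<^sub>R (x - y)) \<bullet> a \<le> b a"
proof -
  have w_inner: "(x + s *\<^sub>R (x - y)) \<bullet> a = x \<bullet> a + s * (x \<bullet> a - y \<bullet> a)" for s a
    by (simp add: inner_add_left inner_diff_left)
  have "\<forall>\<^sub>F s in at_right 0. (x + s *\<^sub>R (x - y)) \<bullet> a \<le> b a" if "a \<in> A" for a
  proof (cases "x \<bullet> a = b a")
    case True
    with tight that show ?thesis by (simp add: w_inner)
  next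
    case False
    with x that have lt: "x \<bullet> a < b a" by auto
    have "((\<lambda>s. (x + s *\<^sub>R (x - y)) \<bullet> a) \<longlongrightarrow> x \<bullet> a) (at_right 0)"
      unfolding w_inner by (auto intro!: tendsto_eq_intros)
    from order_tendstoD(2)[OF this lt] show ?thesis by (rule eventually_mono) simp
  qed
  then have "\<forall>\<^sub>F s in at_right 0. \<forall>a\<in>A. (x + s *\<^sub>R (x - y)) \<bullet> a \<le> b a"
    using eventually_ball_finite[OF A, of "\<lambda>s a. (x + s *\<^sub>R (x - y)) \<bullet> a \<le> b a"] by blast
  then obtain d where "d > 0" "\<forall>s>0. s < d \<longrightarrow> (\<forall>a\<in>A. (x + s *\<^sub>R (x - y)) \<bullet> a \<le> b a)"
    unfolding eventually_at_right_field by auto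
  then show thesis using that[of "d / 2"] by auto
qed

lemma face_of_inequalities_absorb:
  fixes L :: "'a::euclidean_space set"
  assumes L: "affine L" and A: "finite A" and P: "P = {x \<in> L. \<forall>a\<in>A. x \<bullet> a \<le> b a}"
    and F: "F face_of P" and x: "x \<in> F" and y: "y \<in> P"
    and tight: "\<forall>a\<in>A. x \<bullet> a = b a \<longrightarrow> y \<bullet> a = b a"
  shows "y \<in> F"
proof (cases "y = x")
  case False
  have xP: "x \<in> P" using F x face_of_imp_subset by blast
  obtain s where s: "s > 0" "\<forall>a\<in>A. (x + s *\<^sub>R (x - y)) \<bullet> a \<le> b a"
    using inequalities_hold_beyond[OF A _ tight] xP P by blast
  \<comment> \<open>x lies strictly between y and the point w of P beyond x\<close>
  define w where "w = x + s *\<^sub>R (x - y)"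
  have "w \<in> L"
    using affine_alt[THEN iffD1, OF L, rule_format, of y x "1 + s"] xP y P
    by (simp add: w_def algebra_simps)
  with s P have wP: "w \<in> P" by (simp add: w_def)
  define u where "u = s / (1 + s)"
  have u: "0 < u" "u < 1" using s(1) by (auto simp: u_def)
  have "w - y = (1 + s) *\<^sub>R (x - y)" by (simp add: w_def algebra_simps)
  then have "w \<noteq> y" using False s(1) by auto
  moreover have "x = (1 - u) *\<^sub>R w + u *\<^sub>R y"
  proof -
    have "(1 + s) * (1 - u) = 1" "(1 + s) * u = s" using s(1) by (auto simp: u_def field_simps)
    then have "(1 + s) *\<^sub>R ((1 - u) *\<^sub>R w + u *\<^sub>R y) = (1 + s) *\<^sub>R x"
      by (simp add: scaleR_add_right w_def algebra_simps)
    then show ?thesis using s(1) by simp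
  qed
  ultimately have "x \<in> open_segment w y" using u unfolding in_segment(2) by blast
  then show ?thesis using F wP y x unfolding face_of_def by blast
qed (use x in simp)

lemma face_of_inequalities_eq:
  fixes L :: "'a::euclidean_space set"
  assumes L: "affine L" and A: "finite A" and P: "P = {x \<in> L. \<forall>a\<in>A. x \<bullet> a \<le> b a}"
    and F: "F face_of P" "F \<noteq> {}"
  shows "F = {y \<in> P. \<forall>a\<in>A. (\<forall>z\<in>F. z \<bullet> a = b a) \<longrightarrow> y \<bullet> a = b a}"
proof (intro equalityI subsetI)
  fix y assume y: "y \<in> {y \<in> P. \<forall>a\<in>A. (\<forall>z\<in>F. z \<bullet> a = b a) \<longrightarrow> y \<bullet> a = b a}"
  have cF: "convex F" using F(1) by (rule face_of_imp_convex)
  obtain x where x: "x \<in> rel_interior F" using F(2) rel_interior_eq_empty[OF cF] by blast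
  have "\<forall>z\<in>F. z \<bullet> a \<le> b a" if "a \<in> A" for a using F(1) P that face_of_imp_subset by blast
  then have "\<forall>a\<in>A. x \<bullet> a = b a \<longrightarrow> y \<bullet> a = b a"
    using y rel_interior_tight_imp_tight[OF cF _ x] by blast
  then show "y \<in> F"
    using face_of_inequalities_absorb[OF L A P F(1) _] x rel_interior_subset y by blast
qed (use F face_of_imp_subset in blast)

section \<open>Flows and circuits\<close>

lemma subspace_flows: "subspace (flows M)"
  unfolding flows_def by (rule linear_subspace_kernel) (rule matrix_vector_mul_linear)

lemma flows_iff_columns: "x \<in> flows M \<longleftrightarrow> (\<Sum>e\<in>UNIV. x$e *\<^sub>R column e M) = 0"
  by (simp add: flows_def matrix_mult_sum scalar_mult_eq_scaleR)

lemma flow_row_sum: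
  assumes "y \<in> flows M" "supp y \<subseteq> S"
  shows "(\<Sum>e\<in>S. M$i$e * y$e) = 0"
proof -
  have "(\<Sum>e\<in>S. M$i$e * y$e) = (M *v y) $ i"
    using assms(2) unfolding matrix_vector_mult_def
    by (auto simp: supp_def intro!: sum.mono_neutral_left)
  also have "\<dots> = 0" using assms(1) by (simp add: flows_def)
  finally show ?thesis .
qed

lemma sum_scaleR_supp_subset:
  fixes v :: "'e::finite \<Rightarrow> 'a::real_vector"
  assumes "supp x \<subseteq> S"
  shows "(\<Sum>e\<in>S. x$e *\<^sub>R v e) = (\<Sum>e\<in>UNIV. x$e *\<^sub>R v e)"
  using assms by (intro sum.mono_neutral_left) (auto simp: supp_def)

lemma flow_supp_dependent:
  assumes "y \<in> flows M" "y \<noteq> 0"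
  shows "dependent_cols M (supp y)"
  unfolding dependent_cols_def
proof (intro exI[of _ "\<lambda>e. y$e"] conjI)
  show "\<exists>e\<in>supp y. y$e \<noteq> 0"
    using assms(2) by (auto simp: supp_def Finite_Cartesian_Product.vec_eq_iff)
  show "(\<Sum>e\<in>supp y. y$e *\<^sub>R column e M) = 0"
    using assms(1) sum_scaleR_supp_subset[of y "supp y" "\<lambda>e. column e M"] by (simp add: flows_iff_columns)
qed

lemma dependent_cols_flow:
  fixes M :: "real^'e::finite^'r::finite"
  assumes "dependent_cols M D"
  obtains z where "z \<in> flows M" "z \<noteq> 0" "supp z \<subseteq> D"
proof -
  obtain a where a: "\<exists>e\<in>D. a e \<noteq> 0" "(\<Sum>e\<in>D. a e *\<^sub>R column e M) = 0"
    using assms by (auto simp: dependent_cols_def)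
  define z :: "real^'e" where "z = (\<chi> e. if e \<in> D then a e else 0)"
  have sz: "supp z \<subseteq> D" by (auto simp: supp_def z_def)
  have "(\<Sum>e\<in>UNIV. z$e *\<^sub>R column e M) = (\<Sum>e\<in>D. a e *\<^sub>R column e M)"
    unfolding sum_scaleR_supp_subset[OF sz, symmetric] by (simp add: z_def)
  then have "z \<in> flows M" using a(2) by (simp add: flows_iff_columns)
  moreover have "z \<noteq> 0" using a(1) by (auto simp: z_def Finite_Cartesian_Product.vec_eq_iff)
  ultimately show thesis using that sz by blast
qed

lemma dependent_cols_iff: "dependent_cols M C \<longleftrightarrow> \<not> independent_columns (\<lambda>i e. M$i$e) UNIV C"
proof -
  have "(\<Sum>e\<in>C. a e *\<^sub>R column e M) = 0 \<longleftrightarrow> (\<forall>i. (\<Sum>e\<in>C. M$i$e * a e) = 0)" for a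
    by (simp add: Finite_Cartesian_Product.vec_eq_iff sum_component column_def mult.commute)
  then show ?thesis by (auto simp: dependent_cols_def independent_columns_def)
qed

lemma matroid_circuit_flow:
  assumes "matroid_circuit M C"
  obtains y where "y \<in> flows M" "supp y = C"
proof -
  obtain y where y: "y \<in> flows M" "y \<noteq> 0" "supp y \<subseteq> C"
    using assms dependent_cols_flow unfolding matroid_circuit_def by metis
  then have "supp y = C"
    using flow_supp_dependent[OF y(1,2)] assms unfolding matroid_circuit_def by blast
  with y(1) show thesis by (rule that)
qed

lemma circuit_flow_proportional:
  assumes C: "matroid_circuit M (supp y)" and y: "y \<in> flows M"
    and \<delta>: "\<delta> \<in> flows M" "supp \<delta> \<subseteq> supp y"
  obtains c where "\<delta> = c *\<^sub>R y"
proof -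
  have "supp y \<noteq> {}" using C unfolding matroid_circuit_def dependent_cols_def by auto
  then obtain e1 where e1: "y$e1 \<noteq> 0" by (auto simp: supp_def)
  define w where "w = \<delta> - (\<delta>$e1 / y$e1) *\<^sub>R y"
  have "w \<in> flows M" unfolding w_def
    by (intro subspace_diff subspace_scale subspace_flows \<delta>(1) y)
  moreover have "supp w \<subseteq> supp y" using \<delta>(2) by (auto simp: supp_def w_def)
  moreover have "e1 \<in> supp y - supp w" using e1 by (simp add: supp_def w_def)
  ultimately have "w = 0"
    using C flow_supp_dependent unfolding matroid_circuit_def by blast
  then show thesis using that[of "\<delta>$e1 / y$e1"] by (simp add: w_def)
qed

lemma lattice_circuits_iff:
  "\<gamma> \<in> lattice_circuits M \<longleftrightarrow> \<gamma> \<in> flows M \<and> (\<forall>e. \<gamma>$e \<in> {-1, 0, 1}) \<and> matroid_circuit M (supp \<gamma>)"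
proof -
  have "x \<in> \<int>" if "x \<in> {-1, 0, 1 :: real}" for x
    using that Ints_minus[OF Ints_1] by auto
  then show ?thesis by (auto simp: lattice_circuits_def lattice_flows_def)
qed

section \<open>Circuits of a totally unimodular matrix\<close>

lemma totally_unimodular_minor:
  assumes "totally_unimodular M" "inj_on f {..<k}" "inj_on g {..<k}"
  shows "Determinant.det (Matrix.mat k k (\<lambda>(i, j). M$f i$g j)) \<in> {-1, 0, 1}"
proof -
  have "Determinant.det (Matrix.mat k k (\<lambda>(i, j). M$f i$g j)) =
    (\<Sum>p | p permutes {..<k}. of_int (sign p) * (\<Prod>i<k. M$f i$g (p i)))"
    unfolding det_def
    by (auto simp: atLeast0LessThan intro!: sum.cong prod.cong arg_cong2[where f="(*)"]
        dest: permutes_in_image)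
  with assms show ?thesis unfolding totally_unimodular_def by simp
qed

lemma cramer_unit_entry:
  fixes B :: "real mat"
  assumes "B \<in> carrier_mat n n" "x \<in> carrier_vec n" "k < n" "Determinant.det B \<in> {-1, 1}"
    "Determinant.det (replace_col B (B *\<^sub>v x) k) \<in> {-1, 0, 1}"
  shows "vec_index x k \<in> {-1, 0, 1}"
proof -
  have eq: "Determinant.det (replace_col B (B *\<^sub>v x) k) = vec_index x k * Determinant.det B"
    by (rule cramer_lemma_mat[OF assms(1-3)])
  have "t \<in> {-1, 0, 1}" if "r = t * d" "d \<in> {-1, 1}" "r \<in> {-1, 0, 1}" for r t d :: real
    using that by auto
  from this[OF eq assms(4,5)] show ?thesis .
qed

lemma flow_entries_unit_if_nonsingular_minor:
  assumes TU: "totally_unimodular M"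
    and f: "inj_on f {..<m}" and g: "bij_betw g {..<m} C" and j0: "j0 \<notin> C"
    and nonsing: "Determinant.det (Matrix.mat m m (\<lambda>(l, k). M$f l$g k)) \<noteq> 0"
    and y: "y \<in> flows M" "supp y \<subseteq> insert j0 C" "y$j0 = -1"
  shows "y$e \<in> {-1, 0, 1}"
proof -
  define B where "B = Matrix.mat m m (\<lambda>(l, k). M$f l$g k)"
  define x where "x = Matrix.vec m (\<lambda>k. y$g k)"
  have B: "B \<in> carrier_mat m m" and x: "x \<in> carrier_vec m" by (simp_all add: B_def x_def)
  have "Determinant.det B \<in> {-1, 1}"
    using totally_unimodular_minor[OF TU f bij_betw_imp_inj_on[OF g]] nonsing by (auto simp: B_def)
  \<comment> \<open>by Cramer's rule each entry of x is a minor of M divided by det B = \<plusminus>1\<close>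
  have Bx: "B *\<^sub>v x = Matrix.vec m (\<lambda>l. M$f l$j0)"
  proof (rule eq_vecI)
    fix l assume "l < dim_vec (Matrix.vec m (\<lambda>l. M$f l$j0))"
    then have l: "l < m" by simp
    have "M$f l$j0 * y$j0 + (\<Sum>e\<in>C. M$f l$e * y$e) = 0"
      using flow_row_sum[OF y(1,2)] j0 by simp
    moreover have "(\<Sum>e\<in>C. M$f l$e * y$e) = (\<Sum>k<m. M$f l$g k * y$g k)"
      using sum.reindex_bij_betw[OF g, of "\<lambda>e. M$f l$e * y$e"] by simp
    ultimately show "vec_index (B *\<^sub>v x) l = vec_index (Matrix.vec m (\<lambda>l. M$f l$j0)) l"
      using l y(3) by (simp add: B_def x_def scalar_prod_def atLeast0LessThan)
  qed (simp add: B_def)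
  show ?thesis
  proof (cases "e \<in> C")
    case False
    then show ?thesis using y(2,3) by (cases "e = j0") (auto simp: supp_def)
  next
    case True
    then obtain k where k: "k < m" "e = g k" using g by (auto simp: bij_betw_def)
    have replace: "replace_col B (B *\<^sub>v x) k = Matrix.mat m m (\<lambda>(l, k'). M$f l$(g(k := j0)) k')"
      unfolding Bx by (rule eq_matI) (auto simp: replace_col_def B_def)
    have "inj_on (g(k := j0)) {..<m}"
      using g j0 by (intro inj_on_fun_updI) (auto simp: bij_betw_def)
    then have "Determinant.det (replace_col B (B *\<^sub>v x) k) \<in> {-1, 0, 1}"
      unfolding replace by (rule totally_unimodular_minor[OF TU f])
    from cramer_unit_entry[OF B x k(1) \<open>Determinant.det B \<in> {-1, 1}\<close> this]
    show ?thesis using k by (simp add: x_def)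
  qed
qed

lemma circuit_unit_flow:
  assumes TU: "totally_unimodular M" and C: "matroid_circuit M C"
  obtains \<delta> where "\<delta> \<in> flows M" "supp \<delta> = C" "\<forall>e. \<delta>$e \<in> {-1, 0, 1}"
proof -
  obtain y where y: "y \<in> flows M" "supp y = C" using matroid_circuit_flow[OF C] .
  have "C \<noteq> {}" using C unfolding matroid_circuit_def dependent_cols_def by auto
  then obtain j0 where j0: "j0 \<in> C" by blast
  then have yj0: "y$j0 \<noteq> 0" using y(2) by (auto simp: supp_def)
  have "C - {j0} \<subset> C" using j0 by blast
  then have "independent_columns (\<lambda>i e. M$i$e) UNIV (C - {j0})"
    using C by (simp add: matroid_circuit_def dependent_cols_iff)
  then obtain f g where f: "inj_on f {..<card (C - {j0})}"
    and g: "bij_betw g {..<card (C - {j0})} (C - {j0})"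
    and nonsing: "Determinant.det (Matrix.mat (card (C - {j0})) (card (C - {j0}))
                    (\<lambda>(l, k). M$f l$g k)) \<noteq> 0"
    by (rule independent_columns_nonsingular_minor[OF finite finite]) blast
  define \<delta> where "\<delta> = (-1 / y$j0) *\<^sub>R y"
  have \<delta>: "\<delta> \<in> flows M" unfolding \<delta>_def by (intro subspace_scale subspace_flows y(1))
  have supp\<delta>: "supp \<delta> = C" using y(2) yj0 by (auto simp: supp_def \<delta>_def)
  have "\<delta>$j0 = -1" using yj0 by (simp add: \<delta>_def)
  then have "\<forall>e. \<delta>$e \<in> {-1, 0, 1}"
    using flow_entries_unit_if_nonsingular_minor[OF TU f g _ nonsing \<delta>] supp\<delta> by blast
  with \<delta> supp\<delta> show thesis by (rule that)
qed

section \<open>Conformal circuits\<close>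

definition conformal :: "real^'n \<Rightarrow> real^'n \<Rightarrow> bool" where
  "conformal y x \<longleftrightarrow> (\<forall>i. y$i \<noteq> 0 \<longrightarrow> sgn (y$i) = sgn (x$i))"

lemma conformal_trans: "conformal y x \<Longrightarrow> conformal x w \<Longrightarrow> conformal y w"
  unfolding conformal_def by (metis sgn_0_0)

lemma sgn_diff_scaled_eq:
  fixes a b t :: real
  assumes "t > 0" "a * b > 0 \<Longrightarrow> t \<le> a / b" "b \<noteq> 0 \<Longrightarrow> a \<noteq> 0" "a - t * b \<noteq> 0"
  shows "a \<noteq> 0" "sgn (a - t * b) = sgn a"
proof -
  show a: "a \<noteq> 0" using assms(3,4) by auto
  consider "a * b > 0" "b > 0" | "a * b > 0" "b < 0" | "a * b \<le> 0"
    by (metis linorder_neqE_linordered_idom mult_zero_right not_le)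
  then show "sgn (a - t * b) = sgn a"
  proof cases
    case 1
    then have "t * b \<le> a" "a > 0" using assms(2) by (auto simp: field_simps zero_less_mult_iff)
    then show ?thesis using assms(4) by (auto simp: sgn_if)
  next
    case 2
    then have "t * b \<ge> a" "a < 0" using assms(2) by (auto simp: field_simps zero_less_mult_iff)
    then show ?thesis using assms(4) by (auto simp: sgn_if)
  next
    case 3
    then have "(a > 0 \<and> t * b \<le> 0) \<or> (a < 0 \<and> t * b \<ge> 0)"
      using a assms(1) by (auto simp: mult_le_0_iff mult_nonneg_nonpos)
    then show ?thesis by (auto simp: sgn_if)
  qed
qed

lemma conformal_elimination:
  fixes y z :: "real^'n::finite"
  assumes V: "subspace V" and y: "y \<in> V" and z: "z \<in> V" "supp z \<subseteq> supp y"
    and e1: "z$e1 * y$e1 > 0"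
  obtains y' where "y' \<in> V" "conformal y' y" "supp y' \<subset> supp y" "supp y - supp z \<subseteq> supp y'"
proof -
  define P where "P = {e. z$e * y$e > 0}"
  \<comment> \<open>the largest step keeping y - t z conformal to y; it clears the entry e0\<close>
  define t where "t = Min ((\<lambda>e. y$e / z$e) ` P)"
  have "t \<in> (\<lambda>e. y$e / z$e) ` P" unfolding t_def using e1 by (intro Min_in) (auto simp: P_def)
  then obtain e0 where e0: "e0 \<in> P" "t = y$e0 / z$e0" by blast
  have t_le: "t \<le> y$e / z$e" if "e \<in> P" for e unfolding t_def using that by (intro Min_le) auto
  have t: "t > 0" using e0 by (auto simp: P_def zero_less_mult_iff zero_less_divide_iff)
  define y' where "y' = y - t *\<^sub>R z"
  have keep: "y$e \<noteq> 0 \<and> sgn (y'$e) = sgn (y$e)" if "y'$e \<noteq> 0" for e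
  proof -
    have h1: "y$e * z$e > 0 \<Longrightarrow> t \<le> y$e / z$e" using t_le by (simp add: P_def mult.commute)
    have h2: "z$e \<noteq> 0 \<Longrightarrow> y$e \<noteq> 0" using z(2) by (auto simp: supp_def)
    have h3: "y$e - t * z$e \<noteq> 0" using that by (simp add: y'_def)
    show ?thesis using sgn_diff_scaled_eq[OF t h1 h2 h3] by (simp add: y'_def)
  qed
  have "y' \<in> V" unfolding y'_def by (intro subspace_diff subspace_scale V y z(1))
  moreover have "conformal y' y" using keep by (auto simp: conformal_def)
  moreover have "supp y' \<subset> supp y"
  proof -
    have "y'$e0 = 0" using e0 by (auto simp: y'_def P_def)
    moreover have "y$e0 \<noteq> 0" using e0(1) by (auto simp: P_def)
    ultimately show ?thesis using keep by (auto simp: supp_def)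
  qed
  moreover have "supp y - supp z \<subseteq> supp y'" by (auto simp: supp_def y'_def)
  ultimately show thesis by (rule that)
qed

lemma conformal_flow_smaller_support:
  assumes y: "y \<in> flows M" "y \<noteq> 0" and not_circuit: "\<not> matroid_circuit M (supp y)"
  obtains y' where "y' \<in> flows M" "y' \<noteq> 0" "conformal y' y" "supp y' \<subset> supp y"
proof -
  obtain D where D: "D \<subset> supp y" "dependent_cols M D"
    using not_circuit flow_supp_dependent[OF y] unfolding matroid_circuit_def by blast
  then obtain z where z: "z \<in> flows M" "z \<noteq> 0" "supp z \<subseteq> D" by (metis dependent_cols_flow)
  obtain e1 where "z$e1 \<noteq> 0" using z(2) by (auto simp: Finite_Cartesian_Product.vec_eq_iff)
  moreover have "y$e1 \<noteq> 0" using \<open>z$e1 \<noteq> 0\<close> z(3) D(1) by (auto simp: supp_def)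
  ultimately obtain z' where z': "z' \<in> flows M" "supp z' = supp z" "z'$e1 * y$e1 > 0"
  proof (cases "z$e1 * y$e1 > 0")
    case True
    with z(1) show thesis by (rule that[OF _ refl])
  next
    case False
    with \<open>z$e1 \<noteq> 0\<close> \<open>y$e1 \<noteq> 0\<close> have "(- z)$e1 * y$e1 > 0"
      by (simp add: mult_less_0_iff not_less order_le_less)
    moreover have "- z \<in> flows M" using z(1) by (intro subspace_neg subspace_flows)
    ultimately show thesis using that by (auto simp: supp_def)
  qed
  have "supp z' \<subseteq> supp y" using z'(2) z(3) D(1) by auto
  then obtain y' where y': "y' \<in> flows M" "conformal y' y" "supp y' \<subset> supp y"
    "supp y - supp z \<subseteq> supp y'"
    using conformal_elimination[OF subspace_flows y(1) z'(1) _ z'(3)] z'(2) by metis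
  moreover have "y' \<noteq> 0" using y'(4) z(3) D(1) by (auto simp: supp_def)
  ultimately show thesis using that by blast
qed

lemma conformal_circuit_flow:
  assumes "\<mu> \<in> flows M" "\<mu> \<noteq> 0"
  obtains y where "y \<in> flows M" "y \<noteq> 0" "conformal y \<mu>" "matroid_circuit M (supp y)"
proof -
  define Conf where "Conf y \<longleftrightarrow> y \<in> flows M \<and> y \<noteq> 0 \<and> conformal y \<mu>" for y
  have "Conf \<mu>" using assms by (simp add: Conf_def conformal_def)
  then obtain y where y: "Conf y" and ymin: "\<And>y'. Conf y' \<Longrightarrow> card (supp y) \<le> card (supp y')"
    using ex_has_least_nat[of Conf \<mu> "\<lambda>y. card (supp y)"] by blast
  have "matroid_circuit M (supp y)"
  proof (rule ccontr)
    assume "\<not> matroid_circuit M (supp y)"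
    then obtain y' where y': "y' \<in> flows M" "y' \<noteq> 0" "conformal y' y" "supp y' \<subset> supp y"
      using conformal_flow_smaller_support y unfolding Conf_def by blast
    then have "Conf y'" using y conformal_trans unfolding Conf_def by blast
    moreover have "card (supp y') < card (supp y)" using y'(4) by (intro psubset_card_mono) auto
    ultimately show False using ymin by fastforce
  qed
  with y show thesis using that unfolding Conf_def by blast
qed

lemma conformal_lattice_circuit:
  assumes TU: "totally_unimodular M" and "\<mu> \<in> flows M" "\<mu> \<noteq> 0"
  obtains \<delta> where "\<delta> \<in> lattice_circuits M" "\<delta> \<noteq> 0" "\<forall>e. \<delta>$e \<noteq> 0 \<longrightarrow> \<delta>$e = sgn (\<mu>$e)"
proof -
  obtain y where y: "y \<in> flows M" "y \<noteq> 0" "conformal y \<mu>" and C: "matroid_circuit M (supp y)"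
    using conformal_circuit_flow[OF assms(2,3)] .
  obtain \<delta> where \<delta>: "\<delta> \<in> flows M" "supp \<delta> = supp y" "\<forall>e. \<delta>$e \<in> {-1, 0, 1}"
    using circuit_unit_flow[OF TU C] .
  obtain c where c: "\<delta> = c *\<^sub>R y"
    using circuit_flow_proportional[OF C y(1) \<delta>(1)] \<delta>(2) by blast
  define \<delta>' where "\<delta>' = sgn c *\<^sub>R \<delta>"
  have "c \<noteq> 0" using \<delta>(2) y(2) c by (auto simp: supp_def Finite_Cartesian_Product.vec_eq_iff)
  then have supp: "supp \<delta>' = supp y" using \<delta>(2) by (auto simp: supp_def \<delta>'_def sgn_if)
  have unit: "\<delta>'$e \<in> {-1, 0, 1}" for e
    using \<delta>(3) \<open>c \<noteq> 0\<close> by (auto simp: \<delta>'_def sgn_if)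
  have "\<delta>' \<in> lattice_circuits M"
    unfolding lattice_circuits_iff using unit supp C \<delta>(1)
    by (auto simp: \<delta>'_def intro: subspace_scale subspace_flows)
  moreover have "\<delta>' \<noteq> 0" using supp y(2) by (auto simp: supp_def Finite_Cartesian_Product.vec_eq_iff)
  moreover have "\<delta>'$e = sgn (\<mu>$e)" if "\<delta>'$e \<noteq> 0" for e
  proof -
    have "\<delta>'$e = \<bar>c\<bar> * y$e" by (simp add: \<delta>'_def c abs_sgn mult.commute)
    then have "y$e \<noteq> 0" "sgn (\<delta>'$e) = sgn (y$e)" using that \<open>c \<noteq> 0\<close> by (auto simp: sgn_mult)
    moreover have "\<delta>'$e = sgn (\<delta>'$e)" using unit[of e] by auto
    ultimately show ?thesis using y(3) by (simp add: conformal_def)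
  qed
  ultimately show thesis using that by blast
qed

section \<open>The Voronoi cell of the integer flows\<close>

definition norm1 :: "real^'n::finite \<Rightarrow> real" where
  "norm1 x = (\<Sum>i\<in>UNIV. \<bar>x$i\<bar>)"

lemma norm1_nonneg: "norm1 x \<ge> 0"
  by (simp add: norm1_def sum_nonneg)

lemma norm1_eq_0_iff [simp]: "norm1 x = 0 \<longleftrightarrow> x = 0"
  by (simp add: norm1_def sum_nonneg_eq_0_iff Finite_Cartesian_Product.vec_eq_iff)

lemma power2_norm_eq_sum: "(norm (x::real^'n::finite))\<^sup>2 = (\<Sum>i\<in>UNIV. (x$i)\<^sup>2)"
  unfolding norm_vec_def L2_set_def by (simp add: sum_nonneg)

lemma power2_norm_eq_norm1:
  assumes "\<forall>i. x$i \<in> {-1, 0, 1}"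
  shows "(norm x)\<^sup>2 = norm1 x"
  unfolding power2_norm_eq_sum norm1_def
proof (rule sum.cong)
  fix i show "(x$i)\<^sup>2 = \<bar>x$i\<bar>" using assms[rule_format, of i] by auto
qed simp

lemma norm1_le_power2_norm:
  assumes "\<forall>i. x$i \<in> \<int>"
  shows "norm1 x \<le> (norm x)\<^sup>2"
  unfolding power2_norm_eq_sum norm1_def
proof (rule sum_mono)
  fix i
  show "\<bar>x$i\<bar> \<le> (x$i)\<^sup>2"
  proof (cases "x$i = 0")
    case False
    then have "1 \<le> \<bar>x$i\<bar>" using assms Ints_nonzero_abs_ge1 by blast
    then have "\<bar>x$i\<bar> * 1 \<le> \<bar>x$i\<bar> * \<bar>x$i\<bar>" by (intro mult_left_mono) auto
    then show ?thesis by (simp add: power2_eq_square abs_mult_self_eq)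
  qed simp
qed

lemma norm_le_norm_diff_iff: "norm (x::'a::real_inner) \<le> norm (x - m) \<longleftrightarrow> 2 * (x \<bullet> m) \<le> (norm m)\<^sup>2"
  by (simp add: norm_le inner_diff_left inner_diff_right inner_commute power2_norm_eq_inner)

lemma norm1_ge_1:
  assumes "\<forall>i. x$i \<in> \<int>" "x \<noteq> 0"
  shows "norm1 x \<ge> 1"
proof -
  obtain i where "x$i \<noteq> 0" using assms(2) by (auto simp: Finite_Cartesian_Product.vec_eq_iff)
  then have "1 \<le> \<bar>x$i\<bar>" using assms(1) Ints_nonzero_abs_ge1 by blast
  also have "\<dots> \<le> norm1 x" unfolding norm1_def by (rule member_le_sum) auto
  finally show ?thesis .
qed

lemma norm1_diff_sign_vector:
  assumes "\<forall>i. \<mu>$i \<in> \<int>" "\<forall>i. \<delta>$i \<noteq> 0 \<longrightarrow> \<delta>$i = sgn (\<mu>$i)"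
  shows "norm1 (\<mu> - \<delta>) = norm1 \<mu> - norm1 \<delta>"
proof -
  have "\<bar>(\<mu> - \<delta>)$i\<bar> = \<bar>\<mu>$i\<bar> - \<bar>\<delta>$i\<bar>" for i
  proof (cases "\<delta>$i = 0")
    case False
    then have "\<delta>$i = sgn (\<mu>$i)" "\<mu>$i \<noteq> 0" using assms(2) by auto
    moreover have "\<bar>\<mu>$i\<bar> \<ge> 1" using \<open>\<mu>$i \<noteq> 0\<close> assms(1) Ints_nonzero_abs_ge1 by blast
    ultimately show ?thesis by (auto simp: sgn_if)
  qed simp
  then show ?thesis by (simp add: norm1_def sum_subtractf)
qed

lemma inner_le_norm1_if_circuit_inequalities:
  assumes TU: "totally_unimodular M"
    and circ: "\<forall>\<gamma>\<in>lattice_circuits M. 2 * (x \<bullet> \<gamma>) \<le> (norm \<gamma>)\<^sup>2"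
    and \<mu>: "\<mu> \<in> lattice_flows M"
  shows "2 * (x \<bullet> \<mu>) \<le> norm1 \<mu>"
proof -
  \<comment> \<open>subtracting a conformal lattice circuit \<delta> lowers norm1 by norm1 \<delta> = |\<delta>|^2\<close>
  have "2 * (x \<bullet> \<mu>) \<le> norm1 \<mu>" if "\<mu> \<in> lattice_flows M" "norm1 \<mu> \<le> real n" for n \<mu>
    using that
  proof (induction n arbitrary: \<mu>)
    case 0
    then have "\<mu> = 0" using norm1_nonneg[of \<mu>] by simp
    then show ?case by (simp add: norm1_nonneg)
  next
    case (Suc n)
    show ?case
    proof (cases "\<mu> = 0")
      case False
      have \<mu>: "\<mu> \<in> flows M" "\<forall>i. \<mu>$i \<in> \<int>" using Suc.prems(1) by (auto simp: lattice_flows_def)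
      obtain \<delta> where \<delta>: "\<delta> \<in> lattice_circuits M" "\<delta> \<noteq> 0" "\<forall>i. \<delta>$i \<noteq> 0 \<longrightarrow> \<delta>$i = sgn (\<mu>$i)"
        using conformal_lattice_circuit[OF TU \<mu>(1) False] .
      have \<delta>_lattice: "\<delta> \<in> lattice_flows M" and \<delta>_unit: "\<forall>i. \<delta>$i \<in> {-1, 0, 1}"
        using \<delta>(1) by (auto simp: lattice_circuits_def)
      have diff: "norm1 (\<mu> - \<delta>) = norm1 \<mu> - norm1 \<delta>"
        using norm1_diff_sign_vector[OF \<mu>(2) \<delta>(3)] .
      have "norm1 \<delta> \<ge> 1" using \<delta>_lattice \<delta>(2) by (intro norm1_ge_1) (auto simp: lattice_flows_def)
      then have "norm1 (\<mu> - \<delta>) \<le> real n" using Suc.prems(2) diff by simp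
      moreover have "\<mu> - \<delta> \<in> lattice_flows M"
        using Suc.prems(1) \<delta>_lattice unfolding lattice_flows_def
        by (auto intro: subspace_diff subspace_flows Ints_diff)
      ultimately have "2 * (x \<bullet> (\<mu> - \<delta>)) \<le> norm1 (\<mu> - \<delta>)" using Suc.IH by blast
      moreover have "2 * (x \<bullet> \<delta>) \<le> norm1 \<delta>"
        using circ \<delta>(1) power2_norm_eq_norm1[OF \<delta>_unit] by auto
      ultimately show ?thesis using diff by (simp add: inner_diff_right)
    qed (simp add: norm1_nonneg)
  qed
  moreover obtain n :: nat where "norm1 \<mu> \<le> real n" using real_arch_simple by blast
  ultimately show ?thesis using \<mu> by blast
qed

lemma voronoi0_inner_le_norm1:
  assumes TU: "totally_unimodular M" and x: "x \<in> voronoi0 M" and \<mu>: "\<mu> \<in> lattice_flows M"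
  shows "2 * (x \<bullet> \<mu>) \<le> norm1 \<mu>"
proof (rule inner_le_norm1_if_circuit_inequalities[OF TU _ \<mu>])
  show "\<forall>\<gamma>\<in>lattice_circuits M. 2 * (x \<bullet> \<gamma>) \<le> (norm \<gamma>)\<^sup>2"
    using x by (auto simp: voronoi0_def lattice_circuits_def norm_le_norm_diff_iff)
qed

lemma voronoi0_eq_circuit_inequalities:
  assumes TU: "totally_unimodular M"
  shows "voronoi0 M = {x \<in> flows M. \<forall>\<gamma>\<in>lattice_circuits M. x \<bullet> \<gamma> \<le> (norm \<gamma>)\<^sup>2 / 2}"
proof (intro equalityI subsetI)
  fix x assume "x \<in> voronoi0 M"
  then show "x \<in> {x \<in> flows M. \<forall>\<gamma>\<in>lattice_circuits M. x \<bullet> \<gamma> \<le> (norm \<gamma>)\<^sup>2 / 2}"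
    by (auto simp: voronoi0_def lattice_circuits_def norm_le_norm_diff_iff)
next
  fix x assume x: "x \<in> {x \<in> flows M. \<forall>\<gamma>\<in>lattice_circuits M. x \<bullet> \<gamma> \<le> (norm \<gamma>)\<^sup>2 / 2}"
  have "norm x \<le> norm (x - \<mu>)" if \<mu>: "\<mu> \<in> lattice_flows M" for \<mu>
  proof -
    have "2 * (x \<bullet> \<mu>) \<le> norm1 \<mu>"
      by (rule inner_le_norm1_if_circuit_inequalities[OF TU _ \<mu>]) (use x in auto)
    also have "\<dots> \<le> (norm \<mu>)\<^sup>2" using \<mu> by (intro norm1_le_power2_norm) (auto simp: lattice_flows_def)
    finally show ?thesis by (simp add: norm_le_norm_diff_iff)
  qed
  then show "x \<in> voronoi0 M" using x by (auto simp: voronoi0_def)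
qed

section \<open>Circuits tight at a point of the Voronoi cell\<close>

lemma finite_lattice_circuits: "finite (lattice_circuits M)"
proof -
  have "lattice_circuits M \<subseteq> vec_lambda ` (UNIV \<rightarrow>\<^sub>E {-1, 0, 1})"
  proof
    fix \<gamma> assume "\<gamma> \<in> lattice_circuits M"
    then have "vec_nth \<gamma> \<in> UNIV \<rightarrow>\<^sub>E {-1, 0, 1}" by (auto simp: lattice_circuits_iff)
    then show "\<gamma> \<in> vec_lambda ` (UNIV \<rightarrow>\<^sub>E {-1, 0, 1})" by (metis image_eqI vec_nth_inverse)
  qed
  then show ?thesis by (rule finite_subset) (intro finite_imageI finite_PiE; simp)
qed

lemma abs_sum_diff_same_sign:
  fixes a :: "'g \<Rightarrow> real"
  assumes "finite G" "\<forall>g\<in>G. a g \<in> {0, s}" "b \<in> {0, s}" "b \<noteq> 0 \<Longrightarrow> \<exists>g\<in>G. a g \<noteq> 0"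
  shows "\<bar>(\<Sum>g\<in>G. a g) - b\<bar> = (\<Sum>g\<in>G. \<bar>a g\<bar>) - \<bar>b\<bar>"
proof -
  have "\<bar>b\<bar> \<le> (\<Sum>g\<in>G. \<bar>a g\<bar>)"
  proof (cases "b = 0")
    case False
    then obtain g where "g \<in> G" "a g = b" using assms(2-4) by force
    then show ?thesis using assms(1) by (metis member_le_sum abs_ge_zero)
  qed (simp add: sum_nonneg)
  moreover have "(\<Sum>g\<in>G. a g) - b = sgn s * ((\<Sum>g\<in>G. \<bar>a g\<bar>) - \<bar>b\<bar>)"
  proof -
    have sgn_abs: "y = sgn s * \<bar>y\<bar>" if "y \<in> {0, s}" for y using that by (auto simp: sgn_if)
    have "(\<Sum>g\<in>G. a g) = (\<Sum>g\<in>G. sgn s * \<bar>a g\<bar>)" using assms(2) sgn_abs by (intro sum.cong) auto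
    with sgn_abs[OF assms(3)] show ?thesis by (simp add: sum_distrib_left right_diff_distrib)
  qed
  ultimately show ?thesis
  proof (cases "s = 0")
    case True
    with assms(2,3) show ?thesis by (simp add: sum.neutral)
  qed (simp add: abs_mult)
qed

lemma tight_circuits_sign_consistent:
  assumes TU: "totally_unimodular M" and x: "x \<in> voronoi0 M"
    and \<gamma>: "\<gamma>1 \<in> lattice_circuits M" "\<gamma>2 \<in> lattice_circuits M"
    and tight: "x \<in> circuit_hyperplane M \<gamma>1" "x \<in> circuit_hyperplane M \<gamma>2"
    and e: "\<gamma>1$e \<noteq> 0" "\<gamma>2$e \<noteq> 0"
  shows "\<gamma>1$e = \<gamma>2$e"
proof (rule ccontr)
  assume ne: "\<gamma>1$e \<noteq> \<gamma>2$e"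
  have unit: "\<forall>i. \<gamma>1$i \<in> {-1, 0, 1}" "\<forall>i. \<gamma>2$i \<in> {-1, 0, 1}"
    using \<gamma> by (auto simp: lattice_circuits_iff)
  \<comment> \<open>the opposite signs at e cancel in \<gamma>1 + \<gamma>2\<close>
  have "\<gamma>1 + \<gamma>2 \<in> lattice_flows M"
    using \<gamma> unfolding lattice_circuits_def lattice_flows_def
    by (auto intro: subspace_add subspace_flows Ints_add)
  then have "2 * (x \<bullet> (\<gamma>1 + \<gamma>2)) \<le> norm1 (\<gamma>1 + \<gamma>2)" by (rule voronoi0_inner_le_norm1[OF TU x])
  also have "\<dots> < norm1 \<gamma>1 + norm1 \<gamma>2"
    unfolding norm1_def sum.distrib[symmetric]
  proof (rule sum_strict_mono_ex1)
    show "\<forall>i\<in>UNIV. \<bar>(\<gamma>1 + \<gamma>2)$i\<bar> \<le> \<bar>\<gamma>1$i\<bar> + \<bar>\<gamma>2$i\<bar>" by (simp add: abs_triangle_ineq)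
    show "\<exists>i\<in>UNIV. \<bar>(\<gamma>1 + \<gamma>2)$i\<bar> < \<bar>\<gamma>1$i\<bar> + \<bar>\<gamma>2$i\<bar>"
      using ne e unit(1)[rule_format, of e] unit(2)[rule_format, of e] by (intro bexI[of _ e]) auto
  qed simp
  also have "\<dots> = 2 * (x \<bullet> (\<gamma>1 + \<gamma>2))"
    using tight power2_norm_eq_norm1[OF unit(1)] power2_norm_eq_norm1[OF unit(2)]
    by (simp add: circuit_hyperplane_def inner_add_right)
  finally show False by simp
qed

lemma tight_circuits_common_sign:
  assumes TU: "totally_unimodular M" and x: "x \<in> voronoi0 M"
    and G: "G \<subseteq> lattice_circuits M" "\<forall>g\<in>G. x \<in> circuit_hyperplane M g"
    and cover: "\<gamma>$e \<noteq> 0 \<Longrightarrow> \<exists>g\<in>G. g$e \<noteq> 0"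
    and agree: "\<forall>g\<in>G. \<gamma>$e \<noteq> 0 \<and> g$e \<noteq> 0 \<longrightarrow> \<gamma>$e = g$e"
  obtains s where "\<forall>g\<in>G. g$e \<in> {0, s}" "\<gamma>$e \<in> {0, s}"
proof (cases "\<exists>g\<in>G. g$e \<noteq> 0")
  case True
  then obtain g0 where g0: "g0 \<in> G" "g0$e \<noteq> 0" by blast
  have "g$e = g0$e" if "g \<in> G" "g$e \<noteq> 0" for g
    using tight_circuits_sign_consistent[OF TU x _ _ _ _ that(2) g0(2)] G that g0 by blast
  moreover have "\<gamma>$e = g0$e" if "\<gamma>$e \<noteq> 0" using agree g0 that by blast
  ultimately show thesis using that[of "g0$e"] by blast
next
  case False
  then show thesis using that[of 0] cover by auto
qed

lemma tight_if_covered_by_tight_circuits: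
  assumes TU: "totally_unimodular M" and x: "x \<in> voronoi0 M"
    and G: "G \<subseteq> lattice_circuits M" "\<forall>g\<in>G. x \<in> circuit_hyperplane M g"
    and \<gamma>: "\<gamma> \<in> lattice_circuits M"
    and cover: "\<forall>e. \<gamma>$e \<noteq> 0 \<longrightarrow> (\<exists>g\<in>G. g$e \<noteq> 0)"
    and agree: "\<forall>g\<in>G. \<forall>e. \<gamma>$e \<noteq> 0 \<and> g$e \<noteq> 0 \<longrightarrow> \<gamma>$e = g$e"
  shows "x \<in> circuit_hyperplane M \<gamma>"
proof -
  have finG: "finite G" using G(1) finite_lattice_circuits by (rule finite_subset)
  have unit: "\<forall>i. g$i \<in> {-1, 0, 1}" if "g \<in> lattice_circuits M" for g
    using that by (auto simp: lattice_circuits_iff)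
  define \<nu> where "\<nu> = (\<Sum>g\<in>G. g) - \<gamma>"
  \<comment> \<open>the common sign at each edge means that \<nu> has no cancellation\<close>
  have \<nu>_abs: "\<bar>\<nu>$e\<bar> = (\<Sum>g\<in>G. \<bar>g$e\<bar>) - \<bar>\<gamma>$e\<bar>" for e
  proof -
    obtain s where "\<forall>g\<in>G. g$e \<in> {0, s}" "\<gamma>$e \<in> {0, s}"
      using tight_circuits_common_sign[OF TU x G] cover agree by blast
    then show ?thesis
      using abs_sum_diff_same_sign[OF finG, of "\<lambda>g. g$e"] cover
      by (simp add: \<nu>_def sum_component)
  qed
  have "\<nu> \<in> lattice_flows M"
    using G(1) \<gamma> unfolding \<nu>_def lattice_circuits_def lattice_flows_def
    by (auto intro!: subspace_diff subspace_sum subspace_flows Ints_diff Ints_sum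
        simp: sum_component subset_iff)
  then have "2 * (x \<bullet> \<nu>) \<le> norm1 \<nu>" by (rule voronoi0_inner_le_norm1[OF TU x])
  also have "norm1 \<nu> = (\<Sum>g\<in>G. norm1 g) - norm1 \<gamma>"
    unfolding norm1_def \<nu>_abs sum_subtractf by (subst sum.swap) (rule refl)
  also have "\<dots> = (\<Sum>g\<in>G. (norm g)\<^sup>2) - (norm \<gamma>)\<^sup>2"
    using G(1) unit \<gamma> by (auto simp: power2_norm_eq_norm1 intro!: sum.cong)
  also have "(\<Sum>g\<in>G. (norm g)\<^sup>2) = 2 * (x \<bullet> (\<Sum>g\<in>G. g))"
    using G(2) by (simp add: circuit_hyperplane_def inner_sum_right sum_distrib_left)
  finally have "(norm \<gamma>)\<^sup>2 \<le> 2 * (x \<bullet> \<gamma>)" by (simp add: \<nu>_def inner_diff_right)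
  moreover have "2 * (x \<bullet> \<gamma>) \<le> (norm \<gamma>)\<^sup>2"
    using x \<gamma> voronoi0_eq_circuit_inequalities[OF TU] by auto
  moreover have "x \<in> flows M" using x by (simp add: voronoi0_def)
  ultimately show ?thesis by (simp add: circuit_hyperplane_def)
qed

section \<open>Faces of the Voronoi cell and strongly connected orientations\<close>

lemma fst_phi: "fst (phi M F) = (\<Union>\<gamma>\<in>U_face M F. supp \<gamma>)"
  by (simp add: phi_def Let_def)

lemma snd_phi_notin: "e \<notin> fst (phi M F) \<Longrightarrow> snd (phi M F) e = undefined"
  by (simp add: phi_def Let_def)

lemma U_face_tight: "\<gamma> \<in> U_face M F \<Longrightarrow> x \<in> F \<Longrightarrow> x \<in> circuit_hyperplane M \<gamma>"
  by (auto simp: U_face_def)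

lemma snd_phi:
  assumes TU: "totally_unimodular M" and F: "F \<subseteq> voronoi0 M" "F \<noteq> {}"
    and \<gamma>: "\<gamma> \<in> U_face M F" and e: "\<gamma>$e \<noteq> 0"
  shows "snd (phi M F) e = \<gamma>$e"
proof -
  define \<gamma>0 where "\<gamma>0 = (SOME \<gamma>. \<gamma> \<in> U_face M F \<and> e \<in> supp \<gamma>)"
  have \<gamma>0: "\<gamma>0 \<in> U_face M F" "\<gamma>0$e \<noteq> 0"
    using someI[of "\<lambda>\<gamma>. \<gamma> \<in> U_face M F \<and> e \<in> supp \<gamma>" \<gamma>] \<gamma> e by (auto simp: \<gamma>0_def supp_def)
  obtain x where x: "x \<in> F" using F(2) by blast
  \<comment> \<open>SOME picks an arbitrary circuit of U(F) through e, but all of them are tight at x\<close>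
  have "\<gamma>0$e = \<gamma>$e"
    using tight_circuits_sign_consistent[OF TU _ _ _ U_face_tight[OF \<gamma>0(1) x] U_face_tight[OF \<gamma> x]
        \<gamma>0(2) e] F(1) x \<gamma> \<gamma>0(1) by (auto simp: U_face_def)
  moreover have "\<gamma>$e \<in> {-1, 1}" using \<gamma> e by (auto simp: U_face_def lattice_circuits_iff)
  moreover have "e \<in> fst (phi M F)" using \<gamma> e by (auto simp: fst_phi supp_def)
  ultimately show ?thesis by (auto simp: phi_def Let_def \<gamma>0_def)
qed

lemma phi_in_SC:
  fixes M :: "real^'e::finite^'r::finite"
  assumes TU: "totally_unimodular M" and F: "F \<subseteq> voronoi0 M" "F \<noteq> {}"
  shows "phi M F \<in> SC M"
proof -
  have sign: "\<exists>\<gamma>\<in>U_face M F. \<gamma>$e \<noteq> 0 \<and> snd (phi M F) e = \<gamma>$e" if "e \<in> fst (phi M F)" for e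
    using that snd_phi[OF TU F] by (auto simp: fst_phi supp_def)
  have "snd (phi M F) \<in> fst (phi M F) \<rightarrow>\<^sub>E {-1, 1}"
  proof
    fix e assume "e \<in> fst (phi M F)"
    with sign obtain \<gamma> where "\<gamma> \<in> U_face M F" "\<gamma>$e \<noteq> 0" "snd (phi M F) e = \<gamma>$e" by blast
    then show "snd (phi M F) e \<in> {-1, 1}" by (auto simp: U_face_def lattice_circuits_iff)
  qed (rule snd_phi_notin)
  moreover
  have "\<exists>w::'e \<Rightarrow> nat. w e \<ge> 1 \<and> (\<Sum>f\<in>fst (phi M F). (real (w f) * snd (phi M F) f) *\<^sub>R column f M) = 0"
    if e: "e \<in> fst (phi M F)" for e
  proof -
    obtain \<gamma> where \<gamma>: "\<gamma> \<in> U_face M F" "\<gamma>$e \<noteq> 0" using sign[OF e] by blast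
    \<comment> \<open>a single tight circuit through e, with unit weights\<close>
    define w :: "'e \<Rightarrow> nat" where "w f = (if \<gamma>$f \<noteq> 0 then 1 else 0)" for f
    have "real (w f) * snd (phi M F) f = \<gamma>$f" if "f \<in> fst (phi M F)" for f
      using snd_phi[OF TU F \<gamma>(1)] by (auto simp: w_def)
    then have "(\<Sum>f\<in>fst (phi M F). (real (w f) * snd (phi M F) f) *\<^sub>R column f M)
        = (\<Sum>f\<in>fst (phi M F). \<gamma>$f *\<^sub>R column f M)" by simp
    also have "\<dots> = (\<Sum>f\<in>UNIV. \<gamma>$f *\<^sub>R column f M)"
      using \<gamma>(1) by (intro sum_scaleR_supp_subset) (auto simp: fst_phi)
    also have "\<dots> = 0"
      using \<gamma>(1) by (simp add: U_face_def lattice_circuits_iff flows_iff_columns[symmetric])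
    finally show ?thesis using \<gamma>(2) by (intro exI[of _ w]) (simp add: w_def)
  qed
  ultimately show ?thesis
    by (simp add: SC_def strongly_connected_def oriented_submatroid_def)
qed

lemma phi_mono:
  assumes TU: "totally_unimodular M" and F2: "F2 \<subseteq> voronoi0 M" and F1: "F1 \<noteq> {}" "F1 \<subseteq> F2"
  shows "sc_le (phi M F1) (phi M F2)"
proof -
  have U: "U_face M F2 \<subseteq> U_face M F1" using F1(2) by (auto simp: U_face_def)
  then have "fst (phi M F2) \<subseteq> fst (phi M F1)" by (auto simp: fst_phi)
  moreover have "snd (phi M F2) e = snd (phi M F1) e" if e: "e \<in> fst (phi M F2)" for e
  proof -
    obtain \<gamma> where \<gamma>: "\<gamma> \<in> U_face M F2" "\<gamma>$e \<noteq> 0" using e by (auto simp: fst_phi supp_def)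
    have "F1 \<subseteq> voronoi0 M" "F2 \<noteq> {}" using F1 F2 by auto
    then show ?thesis using snd_phi[OF TU F2 _ \<gamma>] snd_phi[OF TU _ F1(1) _ \<gamma>(2)] U \<gamma>(1) by auto
  qed
  ultimately show ?thesis
    unfolding sc_le_def by (auto simp: restrict_def snd_phi_notin)
qed

lemma U_face_subset_if_sc_le:
  assumes TU: "totally_unimodular M"
    and F1: "F1 \<subseteq> voronoi0 M" "F1 \<noteq> {}" and F2: "F2 \<subseteq> voronoi0 M" "F2 \<noteq> {}"
    and le: "sc_le (phi M F2) (phi M F1)"
  shows "U_face M F1 \<subseteq> U_face M F2"
proof
  fix \<gamma> assume \<gamma>: "\<gamma> \<in> U_face M F1"
  then have \<gamma>l: "\<gamma> \<in> lattice_circuits M" by (simp add: U_face_def)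
  have "x \<in> circuit_hyperplane M \<gamma>" if x: "x \<in> F2" for x
  proof (rule tight_if_covered_by_tight_circuits[OF TU _ _ _ \<gamma>l])
    show "x \<in> voronoi0 M" using F2(1) x by blast
    show "U_face M F2 \<subseteq> lattice_circuits M" by (auto simp: U_face_def)
    show "\<forall>g\<in>U_face M F2. x \<in> circuit_hyperplane M g" using U_face_tight x by blast
    have "e \<in> fst (phi M F2)" if "\<gamma>$e \<noteq> 0" for e
      using le \<gamma> that by (auto simp: sc_le_def fst_phi supp_def)
    then show "\<forall>e. \<gamma>$e \<noteq> 0 \<longrightarrow> (\<exists>g\<in>U_face M F2. g$e \<noteq> 0)"
      by (auto simp: fst_phi supp_def)
    show "\<forall>g\<in>U_face M F2. \<forall>e. \<gamma>$e \<noteq> 0 \<and> g$e \<noteq> 0 \<longrightarrow> \<gamma>$e = g$e"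
    proof (intro ballI allI impI)
      fix g e assume g: "g \<in> U_face M F2" and "\<gamma>$e \<noteq> 0 \<and> g$e \<noteq> 0"
      then have "\<gamma>$e = snd (phi M F1) e" "snd (phi M F2) e = g$e" "e \<in> fst (phi M F1)"
        using snd_phi[OF TU F1 \<gamma>] snd_phi[OF TU F2 g] \<gamma> by (auto simp: fst_phi supp_def)
      then show "\<gamma>$e = g$e" using le by (auto simp: sc_le_def)
    qed
  qed
  then show "\<gamma> \<in> U_face M F2" using \<gamma>l by (auto simp: U_face_def)
qed

lemma face_eq_U_face:
  assumes TU: "totally_unimodular M" and F: "F face_of voronoi0 M" "F \<noteq> {}"
  shows "F = {y \<in> voronoi0 M. \<forall>\<gamma>\<in>U_face M F. y \<in> circuit_hyperplane M \<gamma>}"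
proof -
  have FV: "F \<subseteq> voronoi0 M" using F(1) by (rule face_of_imp_subset)
  have hyp: "y \<in> circuit_hyperplane M \<gamma> \<longleftrightarrow> y \<bullet> \<gamma> = (norm \<gamma>)\<^sup>2 / 2" if "y \<in> voronoi0 M" for y \<gamma>
    using that by (auto simp: circuit_hyperplane_def voronoi0_def)
  have "F = {y \<in> voronoi0 M. \<forall>\<gamma>\<in>lattice_circuits M.
              (\<forall>z\<in>F. z \<bullet> \<gamma> = (norm \<gamma>)\<^sup>2 / 2) \<longrightarrow> y \<bullet> \<gamma> = (norm \<gamma>)\<^sup>2 / 2}"
    by (rule face_of_inequalities_eq[OF subspace_imp_affine[OF subspace_flows] finite_lattice_circuits
          voronoi0_eq_circuit_inequalities[OF TU] F])
  also have "\<dots> = {y \<in> voronoi0 M. \<forall>\<gamma>\<in>U_face M F. y \<in> circuit_hyperplane M \<gamma>}"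
    using FV hyp by (auto simp: U_face_def subset_iff)
  finally show ?thesis .
qed

lemma sc_le_phi_refl: "sc_le (phi M F) (phi M F)"
  by (auto simp: sc_le_def restrict_def snd_phi_notin)

lemma phi_inj:
  assumes TU: "totally_unimodular M"
    and F1: "F1 face_of voronoi0 M" "F1 \<noteq> {}" and F2: "F2 face_of voronoi0 M" "F2 \<noteq> {}"
    and eq: "phi M F1 = phi M F2"
  shows "F1 = F2"
proof -
  have V: "F1 \<subseteq> voronoi0 M" "F2 \<subseteq> voronoi0 M" using F1(1) F2(1) face_of_imp_subset by blast+
  have "U_face M F1 \<subseteq> U_face M F2"
    using U_face_subset_if_sc_le[OF TU V(1) F1(2) V(2) F2(2)] eq sc_le_phi_refl by metis
  moreover have "U_face M F2 \<subseteq> U_face M F1"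
    using U_face_subset_if_sc_le[OF TU V(2) F2(2) V(1) F1(2)] eq sc_le_phi_refl by metis
  ultimately show ?thesis using face_eq_U_face[OF TU F1] face_eq_U_face[OF TU F2] by simp
qed

theorem mainTheorem14:
  fixes M :: "real^'e::finite^'r::finite"
  assumes "totally_unimodular M"
  shows "(\<forall>F. F face_of voronoi0 M \<and> F \<noteq> {} \<longrightarrow> phi M F \<in> SC M)
    \<and> inj_on (phi M) {F. F face_of voronoi0 M \<and> F \<noteq> {}}
    \<and> (\<forall>F1 F2. F1 face_of voronoi0 M \<and> F1 \<noteq> {} \<and> F2 face_of voronoi0 M \<and> F1 \<subseteq> F2
          \<longrightarrow> sc_le (phi M F1) (phi M F2))"
proof (intro conjI allI impI inj_onI)
  fix F assume "F face_of voronoi0 M \<and> F \<noteq> {}"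
  then show "phi M F \<in> SC M" using phi_in_SC[OF assms] face_of_imp_subset by blast
next
  fix F1 F2 assume "F1 \<in> {F. F face_of voronoi0 M \<and> F \<noteq> {}}" "F2 \<in> {F. F face_of voronoi0 M \<and> F \<noteq> {}}"
    and "phi M F1 = phi M F2"
  then show "F1 = F2" using phi_inj[OF assms] by blast
next
  fix F1 F2 assume "F1 face_of voronoi0 M \<and> F1 \<noteq> {} \<and> F2 face_of voronoi0 M \<and> F1 \<subseteq> F2"
  then show "sc_le (phi M F1) (phi M F2)" by (intro phi_mono[OF assms face_of_imp_subset]) auto
qed

end
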